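(* Let $q=2^r$ ($r\ge 1$), $\sigma\in\mathrm{Aut}(\mathbb{F}_q)$, and $R=\mathbb{F}_q[X;\sigma]/(X^2)$. Then there is no projective $\bigl((q^4-q)/2,\,q^2/2\bigr)$-arc in $\mathrm{PHG}(2,R)$; equivalently, $\mathrm{m}_{q^2/2}(R)<(q^4-q)/2$.
   Context: $\mathbb{F}_q[X;\sigma]$ is the skew polynomial ring with commutation rule $Xa=\sigma(a)X$; $R=\mathbb{F}_q[X;\sigma]/(X^2)$ is a chain ring of length $2$ and characteristic $2$ with residue field $\mathbb{F}_q$. The projective Hjelmslev plane $\mathrm{PHG}(2,R)$ is the incidence structure whose points are the free rank-$1$ submodules of the right module $R_R^3$, whose lines are the free rank-$2$ submodules of $R_R^3$, with incidence given by inclusion. A projective $(k,n)$-arc is a set of $k$ points meeting every line in at most $n$ points. For $0\le n\le q^2+q$, $\mathrm{m}_n(R)$ denotes the largest $k$ such that a projective $(k,n)$-arc exists in $\mathrm{PHG}(2,R)$. *)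

theory Defs
  imports Main
begin

definition field_aut :: "('a::field \<Rightarrow> 'a) \<Rightarrow> bool" where
  "field_aut \<sigma> \<longleftrightarrow> bij \<sigma> \<and> (\<forall>x y. \<sigma> (x + y) = \<sigma> x + \<sigma> y)
      \<and> (\<forall>x y. \<sigma> (x * y) = \<sigma> x * \<sigma> y)"

text \<open>Elements of R = F_q[X;sigma]/(X^2): the pair (a,b) stands for a + bX.
  Multiplication: (a + bX)(c + dX) = ac + (ad + b sigma(c)) X, since X c = sigma(c) X and X^2 = 0.\<close>
type_synonym 'a skr = "'a \<times> 'a"

definition skadd :: "'a::field skr \<Rightarrow> 'a skr \<Rightarrow> 'a skr" where
  "skadd x y = (fst x + fst y, snd x + snd y)"

definition skmul :: "('a::field \<Rightarrow> 'a) \<Rightarrow> 'a skr \<Rightarrow> 'a skr \<Rightarrow> 'a skr" where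
  "skmul \<sigma> x y = (fst x * fst y, fst x * snd y + snd x * \<sigma> (fst y))"

type_synonym 'a vec3 = "'a skr \<times> 'a skr \<times> 'a skr"

definition vadd :: "'a::field vec3 \<Rightarrow> 'a vec3 \<Rightarrow> 'a vec3" where
  "vadd u v = (skadd (fst u) (fst v), skadd (fst (snd u)) (fst (snd v)),
               skadd (snd (snd u)) (snd (snd v)))"

definition vscale :: "('a::field \<Rightarrow> 'a) \<Rightarrow> 'a vec3 \<Rightarrow> 'a skr \<Rightarrow> 'a vec3" where
  "vscale \<sigma> v c = (skmul \<sigma> (fst v) c, skmul \<sigma> (fst (snd v)) c, skmul \<sigma> (snd (snd v)) c)"

text \<open>Points of PHG(2,R): free rank-1 submodules of R_R^3, i.e. submodules v R with
  basis {v} (the map c \<mapsto> v c injective).\<close>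
definition phg_point :: "('a::field \<Rightarrow> 'a) \<Rightarrow> 'a vec3 set \<Rightarrow> bool" where
  "phg_point \<sigma> P \<longleftrightarrow> (\<exists>v. inj (vscale \<sigma> v) \<and> P = range (vscale \<sigma> v))"

text \<open>Lines of PHG(2,R): free rank-2 submodules u R + w R with basis {u, w}.\<close>
definition phg_line :: "('a::field \<Rightarrow> 'a) \<Rightarrow> 'a vec3 set \<Rightarrow> bool" where
  "phg_line \<sigma> L \<longleftrightarrow> (\<exists>u w.
      inj (\<lambda>(c, d). vadd (vscale \<sigma> u c) (vscale \<sigma> w d)) \<and>
      L = range (\<lambda>(c, d). vadd (vscale \<sigma> u c) (vscale \<sigma> w d)))"

definition proj_arc :: "('a::field \<Rightarrow> 'a) \<Rightarrow> 'a vec3 set set \<Rightarrow> nat \<Rightarrow> nat \<Rightarrow> bool" where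
  "proj_arc \<sigma> K k n \<longleftrightarrow> finite K \<and> card K = k \<and> (\<forall>P\<in>K. phg_point \<sigma> P) \<and>
     (\<forall>L. phg_line \<sigma> L \<longrightarrow> card {P \<in> K. P \<subseteq> L} \<le> n)"

end

theory Submission
  imports Defs "HOL-Library.Product_Plus" "HOL-Library.Cardinality"
begin

text \<open>Write a vector of \<open>R\<^sup>3\<close> as \<open>w = w\<^sub>0 + w\<^sub>1 X\<close> with \<open>w\<^sub>0, w\<^sub>1 \<in> \<bbbF>\<^sub>q\<^sup>3\<close>. It generates a point
  iff \<open>w\<^sub>0 \<noteq> 0\<close>, every point has exactly \<open>q(q - 1)\<close> generators (one per unit of \<open>R\<close>), and
  the lines are the kernels of \<open>w \<mapsto> a\<^sub>0\<cdot>w\<^sub>0 + (a\<^sub>0\<cdot>w\<^sub>1 + a\<^sub>1\<cdot>\<sigma>(w\<^sub>0)) X\<close> with \<open>a\<^sub>0 \<noteq> 0\<close>.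

  Let \<open>K\<close> be a \<open>((q\<^sup>4 - q)/2, q\<^sup>2/2)\<close>-arc with \<open>q\<close> even. Fix an arc point and \<open>a\<^sub>0\<close>; summing
  the arc points over the \<open>q\<^sup>2\<close> lines of the pencil through the point with first coefficient
  \<open>a\<^sub>0\<close>, and then over all \<open>a\<^sub>0\<close>, bounds the number of arc points in each neighbour class
  (the points with a given reduction in \<open>PG(2,q)\<close>) by \<open>q(q - 1)/2\<close>. Since there are
  \<open>q\<^sup>2 + q + 1\<close> classes, all bounds are attained: every class holds exactly \<open>q(q - 1)/2\<close>
  arc points and every line meeting \<open>K\<close> meets it in exactly \<open>q\<^sup>2/2\<close> points.

  For \<open>x \<noteq> 0\<close> and \<open>a\<^sub>0 \<noteq> 0\<close> with \<open>a\<^sub>0\<cdot>x = 0\<close> call the pair empty if no arc generator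
  \<open>w\<close> has \<open>w\<^sub>0 \<in> \<bbbF>x\<close> and \<open>a\<^sub>0\<cdot>w\<^sub>1 = 0\<close>. Double counting with the regularity just obtained
  shows that each \<open>x\<close> lies in an even number of empty pairs and each \<open>a\<^sub>0\<close> in an odd number.
  As there are \<open>q\<^sup>3 - 1\<close> nonzero vectors, an odd number, the total count of empty pairs is
  both even and odd.\<close>

section \<open>Vectors over the residue field\<close>

type_synonym 'a v3 = "'a \<times> 'a \<times> 'a"

definition dot :: "'a::field v3 \<Rightarrow> 'a v3 \<Rightarrow> 'a" where
  "dot x y = fst x * fst y + fst (snd x) * fst (snd y) + snd (snd x) * snd (snd y)"

definition smul :: "'a::field \<Rightarrow> 'a v3 \<Rightarrow> 'a v3" where
  "smul c x = (c * fst x, c * fst (snd x), c * snd (snd x))"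

definition map3 :: "('a \<Rightarrow> 'b) \<Rightarrow> 'a v3 \<Rightarrow> 'b v3" where
  "map3 f x = (f (fst x), f (fst (snd x)), f (snd (snd x)))"

definition in_span :: "'a::field v3 \<Rightarrow> 'a v3 \<Rightarrow> bool" where
  "in_span x y \<longleftrightarrow> (\<exists>c. x = smul c y)"

lemma v3_eq_0_iff: "(x::'a::zero v3) = 0 \<longleftrightarrow> fst x = 0 \<and> fst (snd x) = 0 \<and> snd (snd x) = 0"
  by (simp add: prod_eq_iff)

lemma dot_add_left: "dot (x + y) z = dot x z + dot y z"
  by (simp add: dot_def algebra_simps)
lemma dot_add_right: "dot z (x + y) = dot z x + dot z y"
  by (simp add: dot_def algebra_simps)
lemma dot_diff_right: "dot z (x - y) = dot z x - dot z y"
  by (simp add: dot_def algebra_simps)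
lemma dot_smul_left: "dot (smul c x) z = c * dot x z"
  by (simp add: dot_def smul_def algebra_simps)
lemma dot_smul_right: "dot z (smul c x) = c * dot z x"
  by (simp add: dot_def smul_def algebra_simps)
lemma dot_0_left [simp]: "dot 0 z = 0" by (simp add: dot_def)
lemma dot_0_right [simp]: "dot z 0 = 0" by (simp add: dot_def)
lemma dot_commute: "dot x y = dot y x" by (simp add: dot_def algebra_simps)

lemma smul_smul: "smul a (smul b x) = smul (a * b) x" by (simp add: smul_def)
lemma smul_one [simp]: "smul 1 x = x" by (simp add: smul_def)
lemma smul_0_left [simp]: "smul 0 x = 0" by (simp add: smul_def prod_eq_iff)
lemma smul_0_right [simp]: "smul c 0 = 0" by (simp add: smul_def prod_eq_iff)
lemma smul_eq_0_iff: "smul c x = 0 \<longleftrightarrow> c = 0 \<or> x = 0" by (auto simp: smul_def prod_eq_iff)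
lemma smul_right_cancel: "x \<noteq> 0 \<Longrightarrow> smul a x = smul b x \<longleftrightarrow> a = b"
  by (auto simp: smul_def prod_eq_iff)

lemma in_span_sym: "x \<noteq> 0 \<Longrightarrow> in_span x y \<Longrightarrow> in_span y x"
  unfolding in_span_def
  by (metis divide_self_if mult.commute nonzero_divide_eq_eq smul_one smul_smul smul_0_left)
lemma in_span_trans: "in_span x y \<Longrightarrow> in_span y z \<Longrightarrow> in_span x z"
  unfolding in_span_def by (metis smul_smul)

lemma exists_dot_eq_1:
  fixes s :: "'a::field v3"
  assumes "s \<noteq> 0" shows "\<exists>d. dot d s = 1"
proof -
  obtain s1 s2 s3 where s: "s = (s1, s2, s3)" by (metis prod.collapse)
  consider "s1 \<noteq> 0" | "s2 \<noteq> 0" | "s3 \<noteq> 0" using assms unfolding s by (auto simp: v3_eq_0_iff)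
  then show ?thesis
  proof cases
    case 1 then show ?thesis by (intro exI[of _ "(inverse s1, 0, 0)"]) (simp add: s dot_def)
  next
    case 2 then show ?thesis by (intro exI[of _ "(0, inverse s2, 0)"]) (simp add: s dot_def)
  next
    case 3 then show ?thesis by (intro exI[of _ "(0, 0, inverse s3)"]) (simp add: s dot_def)
  qed
qed

text \<open>If every form vanishing on \<open>s\<close> vanished on \<open>t\<close>, the \<open>2 \<times> 2\<close> minors of \<open>(s, t)\<close> would
  vanish, i.e.\ \<open>t\<close> would be a multiple of \<open>s\<close>.\<close>
lemma exists_dot_eq_0_1:
  fixes s t :: "'a::field v3"
  assumes "s \<noteq> 0" "\<not> in_span t s" shows "\<exists>d. dot d s = 0 \<and> dot d t = 1"
proof -
  have "\<exists>a. dot a s = 0 \<and> dot a t \<noteq> 0"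
  proof (rule ccontr)
    assume "\<not> ?thesis"
    then have H: "\<And>a. dot a s = 0 \<Longrightarrow> dot a t = 0" by blast
    obtain s1 s2 s3 where s: "s = (s1, s2, s3)" by (metis prod.collapse)
    obtain t1 t2 t3 where t: "t = (t1, t2, t3)" by (metis prod.collapse)
    consider "s1 \<noteq> 0" | "s2 \<noteq> 0" | "s3 \<noteq> 0" using assms unfolding s by (auto simp: v3_eq_0_iff)
    then show False
    proof cases
      case 1
      have "s1 * t2 = s2 * t1" using H[of "(-s2, s1, 0)"] by (simp add: s t dot_def algebra_simps)
      moreover have "s1 * t3 = s3 * t1" using H[of "(-s3, 0, s1)"] by (simp add: s t dot_def algebra_simps)
      ultimately have "t = smul (t1 / s1) s" using 1 by (simp add: s t smul_def field_simps)
      then show False using assms(2) unfolding in_span_def by blast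
    next
      case 2
      have "s2 * t1 = s1 * t2" using H[of "(s2, -s1, 0)"] by (simp add: s t dot_def algebra_simps)
      moreover have "s2 * t3 = s3 * t2" using H[of "(0, -s3, s2)"] by (simp add: s t dot_def algebra_simps)
      ultimately have "t = smul (t2 / s2) s" using 2 by (simp add: s t smul_def field_simps)
      then show False using assms(2) unfolding in_span_def by blast
    next
      case 3
      have "s3 * t1 = s1 * t3" using H[of "(s3, 0, -s1)"] by (simp add: s t dot_def algebra_simps)
      moreover have "s3 * t2 = s2 * t3" using H[of "(0, s3, -s2)"] by (simp add: s t dot_def algebra_simps)
      ultimately have "t = smul (t3 / s3) s" using 3 by (simp add: s t smul_def field_simps)
      then show False using assms(2) unfolding in_span_def by blast
    qed
  qed
  then obtain a where a: "dot a s = 0" "dot a t \<noteq> 0" by blast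
  show ?thesis
    by (intro exI[of _ "smul (inverse (dot a t)) a"]) (simp add: dot_smul_left a)
qed

subsection \<open>Counting solutions of linear equations\<close>

lemma sum_card_swap:
  assumes "finite A" "finite B"
  shows "(\<Sum>a\<in>A. card {b\<in>B. P a b}) = (\<Sum>b\<in>B. card {a\<in>A. P a b})"
proof -
  have card_eq: "card {x\<in>C. Q x} = (\<Sum>x\<in>C. if Q x then 1 else 0)" if "finite C" for C and Q :: "'c \<Rightarrow> bool"
    using that by (simp add: sum.If_cases Int_def)
  show ?thesis
    using assms by (simp add: card_eq sum.swap[of "\<lambda>a b. if P a b then 1 else 0"])
qed

lemma sum_indicator_const:
  fixes c :: nat
  assumes "finite B" "C \<subseteq> B" shows "(\<Sum>b\<in>B. if b \<in> C then c else 0) = c * card C"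
  using sum.inter_restrict[OF assms(1), of "\<lambda>_. c" C] assms(2) by (simp add: Int_absorb1 mult.commute)

lemma sum_card_weighted:
  assumes "finite A" "finite B" "S \<subseteq> B" "T \<subseteq> B"
    and "\<And>b. b \<in> B \<Longrightarrow> card {a\<in>A. P a b} = (if b \<in> S then s else 0) + (if b \<in> T then t else 0)"
  shows "(\<Sum>a\<in>A. card {b\<in>B. P a b}) = s * card S + t * card T"
proof -
  have "(\<Sum>a\<in>A. card {b\<in>B. P a b}) = (\<Sum>b\<in>B. card {a\<in>A. P a b})"
    using assms(1,2) by (rule sum_card_swap)
  also have "\<dots> = (\<Sum>b\<in>B. (if b \<in> S then s else 0) + (if b \<in> T then t else 0))"
    using assms(5) by (rule sum.cong[OF refl])
  also have "\<dots> = s * card S + t * card T"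
    by (simp only: sum.distrib sum_indicator_const assms(2-4))
  finally show ?thesis .
qed

lemma sum_card_indicator:
  assumes "finite A" "finite B" "S \<subseteq> B"
    and "\<And>b. b \<in> B \<Longrightarrow> card {a\<in>A. P a b} = (if b \<in> S then s else 0)"
  shows "(\<Sum>a\<in>A. card {b\<in>B. P a b}) = s * card S"
  using sum_card_weighted[of A B S "{}" P s 0] assms by simp

lemma card_filter_add_card_filter_not:
  assumes "finite A" shows "card {x\<in>A. P x} + card {x\<in>A. \<not> P x} = card A"
proof -
  have "card {x\<in>A. P x} + card {x\<in>A. \<not> P x} = card ({x\<in>A. P x} \<union> {x\<in>A. \<not> P x})"
    by (rule card_Un_disjoint[symmetric]) (use assms in auto)
  also have "{x\<in>A. P x} \<union> {x\<in>A. \<not> P x} = A" by blast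
  finally show ?thesis .
qed

lemma card_eq_CARD_mult_card_fiber:
  fixes f :: "'b \<Rightarrow> 'c::finite"
  assumes "finite A" and fibers: "\<And>y y'. card {x\<in>A. f x = y} = card {x\<in>A. f x = y'}"
  shows "card A = CARD('c) * card {x\<in>A. f x = y}"
proof -
  have "card A = (\<Sum>x\<in>A. card {y'\<in>UNIV. f x = y'})" by simp
  also have "\<dots> = (\<Sum>y'\<in>UNIV. card {x\<in>A. f x = y'})"
    using assms(1) by (rule sum_card_swap) simp
  also have "\<dots> = (\<Sum>y'\<in>(UNIV::'c set). card {x\<in>A. f x = y})"
    by (rule sum.cong[OF refl]) (rule fibers)
  finally show ?thesis by simp
qed

text \<open>Translation by a multiple of \<open>d\<close> moves between the level sets of \<open>a \<mapsto> a\<cdot>t\<close> inside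
  a level set of \<open>a \<mapsto> a\<cdot>s\<close>.\<close>
lemma card_dot_translate:
  fixes s :: "'a::{field,finite} v3"
  assumes d: "dot d s = 0" "dot d t = 1"
  shows "card {a. dot a s = b \<and> dot a t = g} = card {a. dot a s = b \<and> dot a t = g'}"
proof -
  have diff: "dot (a - smul (g' - g) d) x = dot a x - (g' - g) * dot d x" for a x
    by (simp add: dot_def smul_def algebra_simps)
  have "bij_betw (\<lambda>a. a + smul (g' - g) d) {a. dot a s = b \<and> dot a t = g} {a. dot a s = b \<and> dot a t = g'}"
  proof (rule bij_betw_byWitness[where f' = "\<lambda>a. a - smul (g' - g) d"])
    show "(\<lambda>a. a + smul (g' - g) d) ` {a. dot a s = b \<and> dot a t = g} \<subseteq> {a. dot a s = b \<and> dot a t = g'}"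
      using d by (auto simp: dot_add_left dot_smul_left)
    show "(\<lambda>a. a - smul (g' - g) d) ` {a. dot a s = b \<and> dot a t = g'} \<subseteq> {a. dot a s = b \<and> dot a t = g}"
    proof
      fix x assume "x \<in> (\<lambda>a. a - smul (g' - g) d) ` {a. dot a s = b \<and> dot a t = g'}"
      then obtain a where "dot a s = b" "dot a t = g'" "x = a - smul (g' - g) d" by blast
      then show "x \<in> {a. dot a s = b \<and> dot a t = g}" using d diff[of a s] diff[of a t] by simp
    qed
  qed auto
  then show ?thesis by (rule bij_betw_same_card)
qed

lemma card_dot_eq:
  fixes s :: "'a::{field,finite} v3"
  assumes "s \<noteq> 0" shows "card {a. dot a s = b} = CARD('a) ^ 2"
proof -
  obtain d where d: "dot d s = 1" using exists_dot_eq_1[OF assms] by blast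
  have "card {a\<in>UNIV. dot a s = y} = card {a\<in>UNIV. dot a s = y'}" for y y'
    using card_dot_translate[of d 0 s 0 y y'] d by simp
  then have "card (UNIV :: 'a v3 set) = CARD('a) * card {a\<in>UNIV. dot a s = b}"
    by (intro card_eq_CARD_mult_card_fiber) simp_all
  then show ?thesis by (simp add: power2_eq_square)
qed

lemma card_dot_eq2:
  fixes s :: "'a::{field,finite} v3"
  assumes "s \<noteq> 0" "\<not> in_span t s" shows "card {a. dot a s = b \<and> dot a t = g} = CARD('a)"
proof -
  obtain d where d: "dot d s = 0" "dot d t = 1" using exists_dot_eq_0_1[OF assms] by blast
  have "card {a\<in>{a. dot a s = b}. dot a t = y} = card {a\<in>{a. dot a s = b}. dot a t = y'}" for y y'
    using card_dot_translate[OF d, of b y y'] by simp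
  then have "card {a. dot a s = b} = CARD('a) * card {a\<in>{a. dot a s = b}. dot a t = g}"
    by (intro card_eq_CARD_mult_card_fiber) simp_all
  then show ?thesis
    using card_dot_eq[OF assms(1)] by (simp add: power2_eq_square)
qed

lemma card_nonzero_orthogonal:
  fixes x :: "'a::{field,finite} v3"
  assumes "x \<noteq> 0" shows "card {a. a \<noteq> 0 \<and> dot a x = 0} = CARD('a) ^ 2 - 1"
proof -
  have "{a. a \<noteq> 0 \<and> dot a x = 0} = {a. dot a x = 0} - {0}" by auto
  then show ?thesis using card_dot_eq[OF assms, of 0] by simp
qed

lemma card_nonzero_orthogonal2:
  fixes x :: "'a::{field,finite} v3"
  assumes "x \<noteq> 0" "\<not> in_span y x"
  shows "card {a. a \<noteq> 0 \<and> dot a x = 0 \<and> dot a y = 0} = CARD('a) - 1"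
proof -
  have "{a. a \<noteq> 0 \<and> dot a x = 0 \<and> dot a y = 0} = {a. dot a x = 0 \<and> dot a y = 0} - {0}" by auto
  then show ?thesis using card_dot_eq2[OF assms, of 0 0] by simp
qed

lemma card_nonzero_orthogonal_pair:
  fixes x :: "'a::{field,finite} v3"
  assumes "x \<noteq> 0"
  shows "card {a. a \<noteq> 0 \<and> dot a x = 0 \<and> dot a z = 0} = (if in_span z x then CARD('a)^2 - 1 else CARD('a) - 1)"
proof (cases "in_span z x")
  case True
  then have "{a. a \<noteq> 0 \<and> dot a x = 0 \<and> dot a z = 0} = {a. a \<noteq> 0 \<and> dot a x = 0}"
    by (auto simp: in_span_def dot_smul_right)
  then show ?thesis using True card_nonzero_orthogonal[OF assms] by simp
qed (simp add: card_nonzero_orthogonal2[OF assms])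

lemma card_nonzero_v3: "card {x::'a::{field,finite} v3. x \<noteq> 0} = CARD('a) ^ 3 - 1"
proof -
  have "{x::'a v3. x \<noteq> 0} = UNIV - {0}" by auto
  then show ?thesis by (simp add: card_Diff_singleton power3_eq_cube)
qed

lemma card_in_span:
  fixes x :: "'a::{field,finite} v3"
  assumes "x \<noteq> 0" shows "card {y. y \<noteq> 0 \<and> in_span y x} = CARD('a) - 1"
proof -
  have "{y. y \<noteq> 0 \<and> in_span y x} = (\<lambda>c. smul c x) ` (UNIV - {0})"
    using assms by (auto simp: in_span_def smul_eq_0_iff)
  moreover have "inj_on (\<lambda>c. smul c x) (UNIV - {0})"
    using assms by (auto simp: inj_on_def smul_right_cancel)
  ultimately show ?thesis by (simp add: card_image card_Diff_singleton)
qed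

lemma card_orthogonal_off_span:
  fixes a y :: "'a::{field,finite} v3"
  assumes "a \<noteq> 0" "y \<noteq> 0" "dot a y = 0"
  shows "card {x. x \<noteq> 0 \<and> dot a x = 0 \<and> \<not> in_span x y} = (CARD('a) - 1) * CARD('a)"
proof -
  let ?A = "{x. x \<noteq> 0 \<and> dot a x = 0}"
  let ?B = "{x. x \<noteq> 0 \<and> in_span x y}"
  have sub: "?B \<subseteq> ?A" using assms(3) unfolding in_span_def by (auto simp: dot_smul_right)
  have "card ?A = CARD('a)^2 - 1"
    using card_nonzero_orthogonal[OF assms(1)] by (simp add: dot_commute)
  moreover have "CARD('a)^2 - 1 - (CARD('a) - 1) = (CARD('a) - 1) * CARD('a)"
    by (simp add: power2_eq_square algebra_simps)
  moreover have "{x. x \<noteq> 0 \<and> dot a x = 0 \<and> \<not> in_span x y} = ?A - ?B" by blast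
  ultimately show ?thesis
    using card_Diff_subset[OF _ sub] card_in_span[OF assms(2)] by simp
qed

lemma card_in_span_of:
  fixes x :: "'a::{field,finite} v3"
  assumes "x \<noteq> 0" shows "card {y. y \<noteq> 0 \<and> in_span x y} = CARD('a) - 1"
proof -
  have "{y. y \<noteq> 0 \<and> in_span x y} = {y. y \<noteq> 0 \<and> in_span y x}"
    using assms in_span_sym by blast
  then show ?thesis using card_in_span[OF assms] by simp
qed


section \<open>Coordinates in \<open>R\<^sup>3\<close>\<close>

definition coeff0 :: "'a::field vec3 \<Rightarrow> 'a v3" where
  "coeff0 w = (fst (fst w), fst (fst (snd w)), fst (snd (snd w)))"

definition coeff1 :: "'a::field vec3 \<Rightarrow> 'a v3" where
  "coeff1 w = (snd (fst w), snd (fst (snd w)), snd (snd (snd w)))"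

definition of_coeffs :: "'a::field v3 \<Rightarrow> 'a v3 \<Rightarrow> 'a vec3" where
  "of_coeffs x y = ((fst x, fst y), (fst (snd x), fst (snd y)), (snd (snd x), snd (snd y)))"

lemma coeff0_of_coeffs [simp]: "coeff0 (of_coeffs x y) = x" by (simp add: of_coeffs_def coeff0_def)
lemma coeff1_of_coeffs [simp]: "coeff1 (of_coeffs x y) = y" by (simp add: of_coeffs_def coeff1_def)

lemma vec3_eq_iff_coeffs: "(u::'a::field vec3) = w \<longleftrightarrow> coeff0 u = coeff0 w \<and> coeff1 u = coeff1 w"
proof -
  have "of_coeffs (coeff0 w) (coeff1 w) = w" for w :: "'a vec3"
    by (simp add: of_coeffs_def coeff0_def coeff1_def)
  then show ?thesis by metis
qed

definition rot :: "'b \<times> 'b \<times> 'b \<Rightarrow> 'b \<times> 'b \<times> 'b" where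
  "rot x = (fst (snd x), snd (snd x), fst x)"

lemma rot_rot_rot: "rot (rot (rot x)) = x" by (simp add: rot_def)
lemma inj_rot: "inj rot" by (metis injI rot_rot_rot)
lemma coeff0_rot: "coeff0 (rot w) = rot (coeff0 w)" by (simp add: rot_def coeff0_def)
lemma coeff1_rot: "coeff1 (rot w) = rot (coeff1 w)" by (simp add: rot_def coeff1_def)
lemma dot_rot: "dot (rot a) (rot x) = dot a x" by (simp add: rot_def dot_def algebra_simps)
lemma map3_rot: "map3 f (rot x) = rot (map3 f x)" by (simp add: rot_def map3_def)

lemma image_rot: "rot ` S = {w. rot (rot w) \<in> S}"
proof (intro set_eqI iffI)
  fix w assume "w \<in> {w. rot (rot w) \<in> S}"
  then have "rot (rot (rot w)) \<in> rot ` S" by blast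
  then show "w \<in> rot ` S" by (simp add: rot_rot_rot)
qed (auto simp: rot_rot_rot)

locale field_automorphism =
  fixes \<sigma> :: "'a::field \<Rightarrow> 'a"
  assumes aut: "field_aut \<sigma>"
begin

lemma aut_add: "\<sigma> (x + y) = \<sigma> x + \<sigma> y" using aut unfolding field_aut_def by blast
lemma aut_mult: "\<sigma> (x * y) = \<sigma> x * \<sigma> y" using aut unfolding field_aut_def by blast
lemma aut_bij: "bij \<sigma>" using aut unfolding field_aut_def by blast
lemma aut_eq_iff: "\<sigma> x = \<sigma> y \<longleftrightarrow> x = y" using aut_bij by (meson bij_def injD)
lemma aut_0 [simp]: "\<sigma> 0 = 0"
  using aut_add[of 0 0] by (metis add_cancel_right_right add_0)
lemma aut_1 [simp]: "\<sigma> 1 = 1"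
proof -
  obtain x where "\<sigma> x = 1" using aut_bij by (metis bij_def surjD)
  then show ?thesis using aut_mult[of 1 x] by simp
qed
lemma aut_eq_0_iff [simp]: "\<sigma> x = 0 \<longleftrightarrow> x = 0" using aut_eq_iff[of x 0] by simp

lemma map3_smul: "map3 \<sigma> (smul c x) = smul (\<sigma> c) (map3 \<sigma> x)"
  by (simp add: map3_def smul_def aut_mult)
lemma map3_eq_0_iff [simp]: "map3 \<sigma> x = 0 \<longleftrightarrow> x = 0"
  by (simp add: map3_def prod_eq_iff)
lemma in_span_map3_iff: "in_span (map3 \<sigma> x) (map3 \<sigma> y) \<longleftrightarrow> in_span x y"
proof
  assume "in_span (map3 \<sigma> x) (map3 \<sigma> y)"
  then obtain c where c: "map3 \<sigma> x = smul c (map3 \<sigma> y)" unfolding in_span_def by blast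
  obtain d where d: "\<sigma> d = c" using aut_bij by (metis bij_def surjD)
  have "map3 \<sigma> x = map3 \<sigma> (smul d y)" using c d map3_smul by simp
  then have "x = smul d y" by (simp add: map3_def prod_eq_iff aut_eq_iff)
  then show "in_span x y" unfolding in_span_def by blast
next
  assume "in_span x y" then show "in_span (map3 \<sigma> x) (map3 \<sigma> y)" unfolding in_span_def using map3_smul by blast
qed

lemma coeff0_vscale: "coeff0 (vscale \<sigma> w c) = smul (fst c) (coeff0 w)"
  by (simp add: coeff0_def vscale_def skmul_def smul_def mult.commute)
lemma coeff1_vscale: "coeff1 (vscale \<sigma> w c) = smul (snd c) (coeff0 w) + smul (\<sigma> (fst c)) (coeff1 w)"
  by (simp add: coeff1_def coeff0_def vscale_def skmul_def smul_def mult.commute)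

lemma vscale_1: "vscale \<sigma> w (1, 0) = w"
  by (simp add: vec3_eq_iff_coeffs coeff0_vscale coeff1_vscale)

lemma vscale_vscale: "vscale \<sigma> (vscale \<sigma> w c) d = vscale \<sigma> w (skmul \<sigma> c d)"
  by (simp add: vec3_eq_iff_coeffs coeff0_vscale coeff1_vscale skmul_def smul_def aut_mult aut_add algebra_simps)

lemma skmul_assoc: "skmul \<sigma> (skmul \<sigma> a b) c = skmul \<sigma> a (skmul \<sigma> b c)"
  by (simp add: skmul_def aut_mult aut_add algebra_simps)

definition skinv :: "'a skr \<Rightarrow> 'a skr" where
  "skinv c = (inverse (fst c), - (inverse (fst c) * snd c * \<sigma> (inverse (fst c))))"

lemma skmul_skinv: "fst c \<noteq> 0 \<Longrightarrow> skmul \<sigma> c (skinv c) = (1, 0)"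
  by (simp add: skmul_def skinv_def)

lemma range_vscale_vscale_unit:
  assumes "fst c \<noteq> 0" shows "range (vscale \<sigma> (vscale \<sigma> w c)) = range (vscale \<sigma> w)"
proof
  show "range (vscale \<sigma> (vscale \<sigma> w c)) \<subseteq> range (vscale \<sigma> w)"
    by (auto simp: vscale_vscale)
  have "vscale \<sigma> w d = vscale \<sigma> (vscale \<sigma> w c) (skmul \<sigma> (skinv c) d)" for d
  proof -
    have "skmul \<sigma> c (skmul \<sigma> (skinv c) d) = skmul \<sigma> (skmul \<sigma> c (skinv c)) d"
      by (simp only: skmul_assoc)
    also have "\<dots> = d" by (simp only: skmul_skinv[OF assms]) (simp add: skmul_def)
    finally show ?thesis by (simp add: vscale_vscale)
  qed
  then show "range (vscale \<sigma> w) \<subseteq> range (vscale \<sigma> (vscale \<sigma> w c))" by blast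
qed

lemma phg_point_generator:
  assumes "phg_point \<sigma> P" shows "\<exists>w. coeff0 w \<noteq> 0 \<and> P = range (vscale \<sigma> w)"
proof -
  obtain w where inj: "inj (vscale \<sigma> w)" and P: "P = range (vscale \<sigma> w)"
    using assms unfolding phg_point_def by blast
  have "coeff0 w \<noteq> 0"
  proof
    assume "coeff0 w = 0"
    then have "vscale \<sigma> w (0, 1) = vscale \<sigma> w (0, 0)"
      by (simp add: vec3_eq_iff_coeffs coeff0_vscale coeff1_vscale)
    then show False using inj by (metis injD prod.inject zero_neq_one)
  qed
  then show ?thesis using P by blast
qed

lemma inj_vscale: assumes "coeff0 w \<noteq> 0" shows "inj (vscale \<sigma> w)"
proof (rule injI)
  fix c d assume e: "vscale \<sigma> w c = vscale \<sigma> w d"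
  have 0: "fst c = fst d" using e assms by (metis coeff0_vscale smul_right_cancel)
  have "smul (snd c) (coeff0 w) = smul (snd d) (coeff0 w)"
    using arg_cong[OF e, of coeff1] 0 by (simp add: coeff1_vscale)
  then have "snd c = snd d" using assms smul_right_cancel by blast
  then show "c = d" using 0 by (simp add: prod_eq_iff)
qed

definition gens :: "'a vec3 set \<Rightarrow> 'a vec3 set" where
  "gens P = {u. coeff0 u \<noteq> 0 \<and> range (vscale \<sigma> u) = P}"

lemma gens_range_vscale:
  assumes "coeff0 w \<noteq> 0"
  shows "gens (range (vscale \<sigma> w)) = vscale \<sigma> w ` {c. fst c \<noteq> 0}"
proof
  show "vscale \<sigma> w ` {c. fst c \<noteq> 0} \<subseteq> gens (range (vscale \<sigma> w))"
  proof
    fix u assume "u \<in> vscale \<sigma> w ` {c. fst c \<noteq> 0}"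
    then obtain c where c: "fst c \<noteq> 0" "u = vscale \<sigma> w c" by blast
    then show "u \<in> gens (range (vscale \<sigma> w))"
      using assms range_vscale_vscale_unit by (simp add: gens_def coeff0_vscale smul_eq_0_iff)
  qed
  show "gens (range (vscale \<sigma> w)) \<subseteq> vscale \<sigma> w ` {c. fst c \<noteq> 0}"
  proof
    fix u assume u: "u \<in> gens (range (vscale \<sigma> w))"
    then have "u \<in> range (vscale \<sigma> w)" unfolding gens_def by (metis (mono_tags) mem_Collect_eq rangeI vscale_1)
    then obtain c where c: "u = vscale \<sigma> w c" by blast
    have "fst c \<noteq> 0" using u c by (auto simp: gens_def coeff0_vscale)
    then show "u \<in> vscale \<sigma> w ` {c. fst c \<noteq> 0}" using c by blast
  qed
qed

lemma gens_range_vscale_coeffs: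
  assumes "coeff0 v \<noteq> 0"
  shows "gens (range (vscale \<sigma> v)) =
    {u. \<exists>c. c \<noteq> 0 \<and> coeff0 u = smul c (coeff0 v) \<and> in_span (coeff1 u - smul (\<sigma> c) (coeff1 v)) (coeff0 v)}"
  unfolding gens_range_vscale[OF assms]
proof (intro set_eqI iffI)
  fix u assume "u \<in> vscale \<sigma> v ` {c. fst c \<noteq> 0}"
  then obtain c d where cd: "c \<noteq> 0" "u = vscale \<sigma> v (c, d)" by auto
  have "coeff1 u - smul (\<sigma> c) (coeff1 v) = smul d (coeff0 v)" using cd by (simp add: coeff1_vscale)
  then show "u \<in> {u. \<exists>c. c \<noteq> 0 \<and> coeff0 u = smul c (coeff0 v) \<and> in_span (coeff1 u - smul (\<sigma> c) (coeff1 v)) (coeff0 v)}"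
    using cd unfolding in_span_def by (auto simp: coeff0_vscale)
next
  fix u assume "u \<in> {u. \<exists>c. c \<noteq> 0 \<and> coeff0 u = smul c (coeff0 v) \<and> in_span (coeff1 u - smul (\<sigma> c) (coeff1 v)) (coeff0 v)}"
  then obtain c d where cd: "c \<noteq> 0" "coeff0 u = smul c (coeff0 v)" "coeff1 u - smul (\<sigma> c) (coeff1 v) = smul d (coeff0 v)"
    unfolding in_span_def by blast
  have "coeff1 u = smul d (coeff0 v) + smul (\<sigma> c) (coeff1 v)" using cd(3) by (metis diff_add_cancel)
  then have "u = vscale \<sigma> v (c, d)" using cd(2) by (simp add: vec3_eq_iff_coeffs coeff0_vscale coeff1_vscale)
  then show "u \<in> vscale \<sigma> v ` {c. fst c \<noteq> 0}" using cd(1) by force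
qed

definition line_of :: "'a v3 \<Rightarrow> 'a v3 \<Rightarrow> 'a vec3 set" where
  "line_of a0 a1 = {w. dot a0 (coeff0 w) = 0 \<and> dot a0 (coeff1 w) + dot a1 (map3 \<sigma> (coeff0 w)) = 0}"

lemma line_of_vscale: assumes "w \<in> line_of a0 a1" shows "vscale \<sigma> w c \<in> line_of a0 a1"
proof -
  have "dot a0 (coeff1 (vscale \<sigma> w c)) + dot a1 (map3 \<sigma> (coeff0 (vscale \<sigma> w c)))
     = \<sigma> (fst c) * (dot a0 (coeff1 w) + dot a1 (map3 \<sigma> (coeff0 w))) + snd c * dot a0 (coeff0 w)"
    by (simp add: coeff0_vscale coeff1_vscale dot_add_right dot_smul_right map3_smul distrib_left)
  then show ?thesis using assms unfolding line_of_def by (simp add: coeff0_vscale dot_smul_right)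
qed

lemma range_vscale_subset_line_of: "range (vscale \<sigma> w) \<subseteq> line_of a0 a1 \<longleftrightarrow> w \<in> line_of a0 a1"
proof
  assume "range (vscale \<sigma> w) \<subseteq> line_of a0 a1"
  then show "w \<in> line_of a0 a1" using vscale_1 by (metis rangeI subsetD)
qed (use line_of_vscale in blast)

text \<open>For \<open>a\<^sub>0 = (\<alpha>\<^sub>1, \<alpha>\<^sub>2, \<alpha>\<^sub>3)\<close> with \<open>\<alpha>\<^sub>3 \<noteq> 0\<close> the equations can be solved for the third
  coordinate, so the line is freely generated by \<open>u = (1, 0, e\<^sub>1)\<close> and \<open>w = (0, 1, e\<^sub>2)\<close>.\<close>
lemma line_of_is_line_coord3:
  assumes a3: "snd (snd a0) \<noteq> 0"
  shows "phg_line \<sigma> (line_of a0 a1)"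
proof -
  define al1 where "al1 = fst a0" define al2 where "al2 = fst (snd a0)" define al3 where "al3 = snd (snd a0)"
  define be1 where "be1 = fst a1" define be2 where "be2 = fst (snd a1)" define be3 where "be3 = snd (snd a1)"
  define ia where "ia = inverse al3"
  have ia: "al3 * ia = 1" using a3 unfolding ia_def al3_def by simp
  define e10 where "e10 = - (al1 * ia)"
  define e20 where "e20 = - (al2 * ia)"
  define e11 where "e11 = - ((be1 + be3 * \<sigma> e10) * ia)"
  define e21 where "e21 = - ((be2 + be3 * \<sigma> e20) * ia)"
  define u :: "'a vec3" where "u = ((1, 0), (0, 0), (e10, e11))"
  define w :: "'a vec3" where "w = ((0, 0), (1, 0), (e20, e21))"
  define f where "f = (\<lambda>(c, d). vadd (vscale \<sigma> u c) (vscale \<sigma> w d))"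
  have f_eq: "f (c, d) = (c, d, (e10 * fst c + e20 * fst d,
      e10 * snd c + e11 * \<sigma> (fst c) + e20 * snd d + e21 * \<sigma> (fst d)))" for c d
    by (simp add: f_def u_def w_def vadd_def vscale_def skmul_def skadd_def)
  have inj: "inj f"
    unfolding inj_def by (auto simp: f_eq)
  have "f cd \<in> line_of a0 a1" for cd
  proof -
    obtain c0 c1 d0 d1 where cd: "cd = ((c0, c1), (d0, d1))" by (metis prod.collapse)
    have 1: "al1 * c0 + al2 * d0 + al3 * (e10 * c0 + e20 * d0) = 0"
      using ia unfolding e10_def e20_def by algebra
    have s3: "\<sigma> (e10 * c0 + e20 * d0) = \<sigma> e10 * \<sigma> c0 + \<sigma> e20 * \<sigma> d0"
      by (simp add: aut_add aut_mult)
    have 2: "al1 * c1 + al2 * d1 + al3 * (e10 * c1 + e11 * \<sigma> c0 + e20 * d1 + e21 * \<sigma> d0)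
        + (be1 * \<sigma> c0 + be2 * \<sigma> d0 + be3 * (\<sigma> e10 * \<sigma> c0 + \<sigma> e20 * \<sigma> d0)) = 0"
      using ia e10_def e20_def unfolding e11_def e21_def by algebra
    show ?thesis using 1 2 unfolding cd f_eq line_of_def
      by (simp add: dot_def coeff0_def coeff1_def map3_def al1_def al2_def al3_def be1_def be2_def be3_def s3)
  qed
  moreover have "v \<in> range f" if v: "v \<in> line_of a0 a1" for v
  proof -
    obtain c0 c1 d0 d1 x3 y3 where vv: "v = ((c0, c1), (d0, d1), (x3, y3))" by (metis prod.collapse)
    have k1: "al1 * c0 + al2 * d0 + al3 * x3 = 0" and
      k2: "al1 * c1 + al2 * d1 + al3 * y3 + (be1 * \<sigma> c0 + be2 * \<sigma> d0 + be3 * \<sigma> x3) = 0"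
      using v unfolding line_of_def vv
      by (simp_all add: dot_def coeff0_def coeff1_def map3_def al1_def al2_def al3_def be1_def be2_def be3_def)
    have x3: "x3 = e10 * c0 + e20 * d0"
      using k1 ia unfolding e10_def e20_def by algebra
    have "\<sigma> x3 = \<sigma> e10 * \<sigma> c0 + \<sigma> e20 * \<sigma> d0"
      unfolding x3 by (simp add: aut_add aut_mult)
    then have y3: "y3 = e10 * c1 + e11 * \<sigma> c0 + e20 * d1 + e21 * \<sigma> d0"
      using k2 ia e10_def e20_def unfolding e11_def e21_def by algebra
    have "v = f ((c0, c1), (d0, d1))" using x3 y3 by (simp add: f_eq vv)
    then show ?thesis by blast
  qed
  ultimately have "line_of a0 a1 = range f" by blast
  then show ?thesis unfolding phg_line_def using inj f_def by blast
qed

lemma line_of_rot: "line_of (rot a0) (rot a1) = rot ` line_of a0 a1"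
proof -
  have "w \<in> line_of (rot a0) (rot a1) \<longleftrightarrow> rot (rot w) \<in> line_of a0 a1" for w
  proof -
    have "dot (rot a0) (coeff0 w) = dot a0 (coeff0 (rot (rot w)))"
      by (metis dot_rot rot_rot_rot coeff0_rot)
    moreover have "dot (rot a0) (coeff1 w) = dot a0 (coeff1 (rot (rot w)))"
      by (metis dot_rot rot_rot_rot coeff1_rot)
    moreover have "dot (rot a1) (map3 \<sigma> (coeff0 w)) = dot a1 (map3 \<sigma> (coeff0 (rot (rot w))))"
      by (metis dot_rot rot_rot_rot coeff0_rot map3_rot)
    ultimately show ?thesis unfolding line_of_def by simp
  qed
  then show ?thesis unfolding image_rot by blast
qed

lemma phg_line_rot: assumes "phg_line \<sigma> L" shows "phg_line \<sigma> (rot ` L)"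
proof -
  obtain u w where inj: "inj (\<lambda>(c, d). vadd (vscale \<sigma> u c) (vscale \<sigma> w d))"
    and L: "L = range (\<lambda>(c, d). vadd (vscale \<sigma> u c) (vscale \<sigma> w d))"
    using assms unfolding phg_line_def by blast
  have comm: "(\<lambda>(c, d). vadd (vscale \<sigma> (rot u) c) (vscale \<sigma> (rot w) d))
      = rot \<circ> (\<lambda>(c, d). vadd (vscale \<sigma> u c) (vscale \<sigma> w d))"
    by (auto simp: rot_def vadd_def vscale_def)
  have "rot ` L = range (\<lambda>(c, d). vadd (vscale \<sigma> (rot u) c) (vscale \<sigma> (rot w) d))"
    unfolding L comm image_comp ..
  moreover have "inj (\<lambda>(c, d). vadd (vscale \<sigma> (rot u) c) (vscale \<sigma> (rot w) d))"
    unfolding comm using inj_compose[OF inj_rot inj] .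
  ultimately show ?thesis unfolding phg_line_def by blast
qed

lemma line_of_is_line:
  assumes "a0 \<noteq> 0" shows "phg_line \<sigma> (line_of a0 a1)"
proof -
  consider "snd (snd a0) \<noteq> 0" | "snd (snd (rot (rot a0))) \<noteq> 0" | "snd (snd (rot a0)) \<noteq> 0"
    using assms by (auto simp: prod_eq_iff rot_def)
  then show ?thesis
  proof cases
    case 1 then show ?thesis by (rule line_of_is_line_coord3)
  next
    case 2
    then have "phg_line \<sigma> (rot ` line_of (rot (rot a0)) (rot (rot a1)))" by (intro phg_line_rot line_of_is_line_coord3)
    then show ?thesis unfolding line_of_rot[symmetric] rot_rot_rot .
  next
    case 3
    then have "phg_line \<sigma> (rot ` rot ` line_of (rot a0) (rot a1))" by (intro phg_line_rot line_of_is_line_coord3)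
    then show ?thesis unfolding line_of_rot[symmetric] rot_rot_rot .
  qed
qed

end

locale finite_field_automorphism = field_automorphism \<sigma> for \<sigma> :: "'a::{field,finite} \<Rightarrow> 'a"
begin

lemma card_gens: assumes "phg_point \<sigma> P" shows "card (gens P) = (CARD('a) - 1) * CARD('a)"
proof -
  obtain w where w: "coeff0 w \<noteq> 0" "P = range (vscale \<sigma> w)" using phg_point_generator[OF assms] by blast
  have "{c::'a skr. fst c \<noteq> 0} = (UNIV - {0}) \<times> UNIV" by auto
  then have "card {c::'a skr. fst c \<noteq> 0} = (CARD('a) - 1) * CARD('a)"
    by (simp add: card_cartesian_product card_Diff_singleton)
  moreover have "card (gens P) = card {c::'a skr. fst c \<noteq> 0}"
    unfolding w(2) gens_range_vscale[OF w(1)] using inj_vscale[OF w(1)]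
    by (simp add: card_image inj_on_subset)
  ultimately show ?thesis by simp
qed

lemma card_gens_of_points:
  assumes "\<forall>P\<in>S. phg_point \<sigma> P"
  shows "card {u. coeff0 u \<noteq> 0 \<and> range (vscale \<sigma> u) \<in> S} = (CARD('a) - 1) * CARD('a) * card S"
proof -
  have "S \<subseteq> range (\<lambda>w. range (vscale \<sigma> w))" using assms unfolding phg_point_def by blast
  then have fin: "finite S" by (rule finite_subset) simp
  have "{u. coeff0 u \<noteq> 0 \<and> range (vscale \<sigma> u) \<in> S} = (\<Union>P\<in>S. gens P)"
    unfolding gens_def by auto
  also have "card \<dots> = (\<Sum>P\<in>S. card (gens P))"
    by (rule card_UN_disjoint[OF fin]) (auto simp: gens_def)
  also have "\<dots> = (\<Sum>P\<in>S. (CARD('a) - 1) * CARD('a))"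
    using assms card_gens by (meson sum.cong)
  also have "\<dots> = (CARD('a) - 1) * CARD('a) * card S"
    by simp
  finally show ?thesis .
qed

end


section \<open>Arithmetic identities\<close>

text \<open>With \<open>q = 2m + 2\<close>, \<open>Q = |R\<^sup>\<times>|\<close>, \<open>C\<close> the number of arc generators and \<open>L\<close> the
  number of generators on a full line, the weighted pencil sums \<open>q SX + q\<^sup>2 SY\<close> exceed their
  value for full lines by a positive multiple of \<open>B - Q(m + 1)(2m + 1)\<close>, where \<open>B\<close> counts
  the arc generators in the class of the base point.\<close>
lemma pencil_sums_identity:
  fixes m B SX SY Q C L :: nat
  assumes SX: "SX + (2*m+1) * B = (2*m+1) * C"
    and SY: "SY = (2*m+1) * B + (2*m+2)*(2*m+1) * Q"
    and C: "C = Q * ((m+1)*(2*m+1)*(4*m*m+10*m+7))" and L: "L = Q * (2*(m+1)*(m+1))"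
  shows "(2*m+2) * SX + (2*m+2)*(2*m+2) * SY + (2*m+2)*(2*m+1)*(2*m+1) * (Q*(m+1)*(2*m+1))
       = (2*m+1)*(2*m+3) * ((2*m+2)*(2*m+2) * L) + (2*m+2)*(2*m+1)*(2*m+1) * B"
proof -
  have "int SX + (2 * int m + 1) * int B = (2 * int m + 1) * int C"
    using arg_cong[OF SX, of int] by (simp add: algebra_simps)
  moreover have "int SY = (2 * int m + 1) * int B + (2 * int m + 2) * (2 * int m + 1) * int Q"
    using arg_cong[OF SY, of int] by (simp add: algebra_simps)
  moreover have "int C = int Q * ((int m + 1) * (2 * int m + 1) * (4 * int m * int m + 10 * int m + 7))"
    using arg_cong[OF C, of int] by (simp add: algebra_simps)
  moreover have "int L = int Q * (2 * (int m + 1) * (int m + 1))"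
    using arg_cong[OF L, of int] by (simp add: algebra_simps)
  ultimately have "int ((2*m+2) * SX + (2*m+2)*(2*m+2) * SY + (2*m+2)*(2*m+1)*(2*m+1) * (Q*(m+1)*(2*m+1)))
      = int ((2*m+1)*(2*m+3) * ((2*m+2)*(2*m+2) * L) + (2*m+2)*(2*m+1)*(2*m+1) * B)"
    by simp algebra
  then show ?thesis by (simp only: of_nat_eq_iff)
qed

lemma even_count_arith:
  fixes Q m b1 b2 e :: nat
  assumes "Q > 0"
    and b: "b1 + b2 = Q*(m+1)*(2*m+1)"
    and e: "Q*(m+1)*e = (2*m+1)*b1 + (2*m+1)*(2*m+3)*b2"
    and b2: "b2 = 0 \<or> b2 = Q"
  shows "even ((2*m+1)*(2*m+3) - e)"
proof -
  have nz: "Q*(m+1) \<noteq> 0" using \<open>Q > 0\<close> by simp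
  from b2 show ?thesis
  proof
    assume "b2 = 0"
    then have "Q*(m+1)*e = Q*(m+1)*((2*m+1)*(2*m+1))" using b e by (simp add: algebra_simps)
    then have "e = (2*m+1)*(2*m+1)" using mult_left_cancel[OF nz] by blast
    moreover have "(2*m+1)*(2*m+3) = (2*m+1)*(2*m+1) + 2*(2*m+1)" by (simp add: algebra_simps)
    ultimately show ?thesis by simp
  next
    assume b2: "b2 = Q"
    have "Q*(m+1)*e + (2*m+1)*Q = (2*m+1)*(b1 + Q) + (2*m+1)*(2*m+3)*Q"
      using e b2 by (simp add: algebra_simps)
    also have "\<dots> = Q*(m+1)*((2*m+1)*(2*m+3)) + (2*m+1)*Q"
      using b b2 by (simp add: algebra_simps)
    finally have "Q*(m+1)*e = Q*(m+1)*((2*m+1)*(2*m+3))" by simp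
    then have "e = (2*m+1)*(2*m+3)" using mult_left_cancel[OF nz] by blast
    then show ?thesis by simp
  qed
qed

lemma odd_count_arith:
  fixes Q m c e :: nat
  assumes "Q > 0"
    and e: "Q*(m+1)*e = (2*m+1)*c"
    and c: "c = 0 \<or> c = Q*(2*(m+1)*(m+1))"
  shows "odd ((2*m+1)*(2*m+3) - e)"
proof -
  have nz: "Q*(m+1) \<noteq> 0" using \<open>Q > 0\<close> by simp
  from c show ?thesis
  proof
    assume "c = 0"
    then have "Q*(m+1)*e = Q*(m+1)*0" using e by simp
    then have "e = 0" using mult_left_cancel[OF nz] by blast
    then show ?thesis by simp
  next
    assume "c = Q*(2*(m+1)*(m+1))"
    then have "Q*(m+1)*e = Q*(m+1)*((2*m+1)*(2*m+2))" using e by (simp add: algebra_simps)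
    then have "e = (2*m+1)*(2*m+2)" using mult_left_cancel[OF nz] by blast
    moreover have "(2*m+1)*(2*m+3) = (2*m+1)*(2*m+2) + (2*m+1)" by (simp add: algebra_simps)
    ultimately show ?thesis by simp
  qed
qed

section \<open>An arc of the critical size over a field of even order\<close>

locale even_order_arc = finite_field_automorphism \<sigma> for \<sigma> :: "'a::{field,finite} \<Rightarrow> 'a" +
  fixes K :: "'a vec3 set set" and m :: nat
  assumes card_field: "CARD('a) = 2*m+2"
    and arc: "proj_arc \<sigma> K ((CARD('a)^4 - CARD('a)) div 2) (CARD('a)^2 div 2)"
begin

lemma card_field_minus_1: "CARD('a) - 1 = 2*m+1"
  using card_field by simp
lemma card_field_sq: "CARD('a)^2 = (2*m+2)*(2*m+2)"
  using card_field by (simp add: power2_eq_square)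
lemma card_field_sq_minus_1: "CARD('a)^2 - 1 = (2*m+1)*(2*m+3)"
  using card_field by (simp add: power2_eq_square algebra_simps)
lemma card_field_cube_minus_1: "CARD('a)^3 - 1 = (2*m+1)*(4*m*m+10*m+7)"
  using card_field by (simp add: power3_eq_cube algebra_simps)

definition nunits :: nat where "nunits = (2*m+1)*(2*m+2)"

definition arc_gens :: "'a vec3 set" where
  "arc_gens = {u. coeff0 u \<noteq> 0 \<and> range (vscale \<sigma> u) \<in> K}"

definition line_count :: "'a v3 \<Rightarrow> 'a v3 \<Rightarrow> nat" where
  "line_count a0 a1 = card (arc_gens \<inter> line_of a0 a1)"

definition line_max :: nat where "line_max = nunits * (2*(m+1)*(m+1))"

lemma nunits_pos: "nunits > 0" unfolding nunits_def by simp

lemma card_units_eq_nunits: "(CARD('a) - 1) * CARD('a) = nunits"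
  unfolding nunits_def card_field by simp

lemma arc_points: "\<forall>P\<in>K. phg_point \<sigma> P" using arc unfolding proj_arc_def by blast

lemma card_gens_eq_nunits: "phg_point \<sigma> P \<Longrightarrow> card (gens P) = nunits"
  using card_gens card_units_eq_nunits by simp

lemma card_arc_gens: "card arc_gens = nunits * ((m+1)*(2*m+1)*(4*m*m+10*m+7))"
proof -
  have "CARD('a)^4 - CARD('a) = 2 * ((m+1)*(2*m+1)*(4*m*m+10*m+7))"
    unfolding card_field by (simp add: power4_eq_xxxx algebra_simps)
  then have "card K = (m+1)*(2*m+1)*(4*m*m+10*m+7)"
    using arc unfolding proj_arc_def by (metis nonzero_mult_div_cancel_left zero_neq_numeral)
  then show ?thesis
    using card_gens_of_points[OF arc_points] card_units_eq_nunits unfolding arc_gens_def by metis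
qed

lemma arc_gens_coeff0_nonzero: "u \<in> arc_gens \<Longrightarrow> coeff0 u \<noteq> 0"
  unfolding arc_gens_def by blast

lemma gens_subset_arc_gens: "v \<in> arc_gens \<Longrightarrow> gens (range (vscale \<sigma> v)) \<subseteq> arc_gens"
  unfolding gens_def arc_gens_def by auto

lemma line_count_le: assumes "a0 \<noteq> 0" shows "line_count a0 a1 \<le> line_max"
proof -
  let ?KL = "{P\<in>K. P \<subseteq> line_of a0 a1}"
  have "card ?KL \<le> CARD('a)^2 div 2"
    using arc line_of_is_line[OF assms] unfolding proj_arc_def by blast
  also have "CARD('a)^2 div 2 = 2*(m+1)*(m+1)"
    unfolding card_field by (simp add: power2_eq_square algebra_simps)
  finally have "nunits * card ?KL \<le> line_max"
    unfolding line_max_def by (rule mult_le_mono2)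
  moreover have "arc_gens \<inter> line_of a0 a1 = {u. coeff0 u \<noteq> 0 \<and> range (vscale \<sigma> u) \<in> ?KL}"
    unfolding arc_gens_def using range_vscale_subset_line_of by blast
  then have "line_count a0 a1 = (CARD('a) - 1) * CARD('a) * card ?KL"
    unfolding line_count_def by (simp only:) (rule card_gens_of_points, use arc_points in blast)
  ultimately show ?thesis using card_units_eq_nunits by simp
qed

subsection \<open>Counting along a pencil\<close>

text \<open>For an arc generator \<open>v\<close> and \<open>a\<^sub>0\<cdot>v\<^sub>0 = 0\<close>, the lines \<open>line_of a0 a1\<close> through \<open>v\<close> are
  those with \<open>a1 \<in> pencil a0 v\<close>. An arc generator \<open>u\<close> on the reduced line \<open>a\<^sub>0\<cdot>x = 0\<close> lies on
  \<open>q\<close> of them if it is \<open>far\<close> from \<open>v\<close> (\<open>u\<^sub>0 \<notin> \<bbbF>v\<^sub>0\<close>), on all \<open>q\<^sup>2\<close> if it is \<open>near\<close>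
  (\<open>u\<^sub>0 = c v\<^sub>0\<close> and \<open>a\<^sub>0\<cdot>u\<^sub>1 = \<sigma>(c) a\<^sub>0\<cdot>v\<^sub>1\<close>), and on none otherwise.\<close>

definition pencil :: "'a v3 \<Rightarrow> 'a vec3 \<Rightarrow> 'a v3 set" where
  "pencil a0 v = {a1. dot a1 (map3 \<sigma> (coeff0 v)) = - dot a0 (coeff1 v)}"

definition far_gens :: "'a v3 \<Rightarrow> 'a vec3 \<Rightarrow> 'a vec3 set" where
  "far_gens a0 v = {u\<in>arc_gens. dot a0 (coeff0 u) = 0 \<and> \<not> in_span (coeff0 u) (coeff0 v)}"

definition near_gens :: "'a v3 \<Rightarrow> 'a vec3 \<Rightarrow> 'a vec3 set" where
  "near_gens a0 v = {u\<in>arc_gens. \<exists>c. coeff0 u = smul c (coeff0 v) \<and> dot a0 (coeff1 u) = \<sigma> c * dot a0 (coeff1 v)}"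

lemma card_pencil: "coeff0 v \<noteq> 0 \<Longrightarrow> card (pencil a0 v) = CARD('a)^2"
  unfolding pencil_def by (rule card_dot_eq) simp

lemma line_of_iff_pencil:
  "u \<in> line_of a0 a1 \<longleftrightarrow> dot a0 (coeff0 u) = 0 \<and> a1 \<in> pencil a0 u"
  unfolding line_of_def pencil_def by (auto simp: eq_neg_iff_add_eq_0 add.commute)

lemma card_pencil_lines_through:
  assumes v0: "coeff0 v \<noteq> 0" and d0: "dot a0 (coeff0 v) = 0" and u: "u \<in> arc_gens"
  shows "card {a1\<in>pencil a0 v. u \<in> line_of a0 a1}
    = (if u \<in> far_gens a0 v then CARD('a) else 0) + (if u \<in> near_gens a0 v then CARD('a)^2 else 0)"
proof (cases "dot a0 (coeff0 u) = 0")
  case False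
  then have "u \<notin> near_gens a0 v" "u \<notin> far_gens a0 v"
    using d0 by (auto simp: near_gens_def far_gens_def dot_smul_right)
  moreover have "{a1\<in>pencil a0 v. u \<in> line_of a0 a1} = {}"
    using False by (auto simp: line_of_iff_pencil)
  ultimately show ?thesis by simp
next
  case on_line: True
  have sv0: "map3 \<sigma> (coeff0 v) \<noteq> 0" using v0 by simp
  show ?thesis
  proof (cases "in_span (coeff0 u) (coeff0 v)")
    case False
    have "{a1\<in>pencil a0 v. u \<in> line_of a0 a1} =
        {a1. dot a1 (map3 \<sigma> (coeff0 v)) = - dot a0 (coeff1 v) \<and> dot a1 (map3 \<sigma> (coeff0 u)) = - dot a0 (coeff1 u)}"
      using on_line by (auto simp: line_of_iff_pencil pencil_def)
    also have "card \<dots> = CARD('a)" by (rule card_dot_eq2) (use sv0 in_span_map3_iff False in auto)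
    moreover have "u \<in> far_gens a0 v" using u on_line False unfolding far_gens_def by blast
    moreover have "u \<notin> near_gens a0 v" using False unfolding near_gens_def in_span_def by blast
    ultimately show ?thesis by simp
  next
    case True
    then obtain c where c: "coeff0 u = smul c (coeff0 v)" unfolding in_span_def by blast
    have c_unique: "c' = c" if "coeff0 u = smul c' (coeff0 v)" for c'
      using that c v0 smul_right_cancel by metis
    have "a1 \<in> pencil a0 u \<longleftrightarrow> dot a0 (coeff1 u) = \<sigma> c * dot a0 (coeff1 v)" if "a1 \<in> pencil a0 v" for a1
    proof -
      have "dot a1 (map3 \<sigma> (coeff0 u)) = \<sigma> c * (- dot a0 (coeff1 v))"
        using that by (simp add: pencil_def c map3_smul dot_smul_right)
      then show ?thesis unfolding pencil_def by auto
    qed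
    then have "{a1\<in>pencil a0 v. u \<in> line_of a0 a1} =
        (if dot a0 (coeff1 u) = \<sigma> c * dot a0 (coeff1 v) then pencil a0 v else {})"
      using on_line by (auto simp: line_of_iff_pencil)
    moreover have "u \<in> near_gens a0 v \<longleftrightarrow> dot a0 (coeff1 u) = \<sigma> c * dot a0 (coeff1 v)"
      using u c c_unique unfolding near_gens_def by blast
    moreover have "u \<notin> far_gens a0 v" using True unfolding far_gens_def by blast
    ultimately show ?thesis using card_pencil[OF v0] by simp
  qed
qed

lemma sum_line_count_pencil:
  assumes v: "v \<in> arc_gens" and d0: "dot a0 (coeff0 v) = 0"
  shows "(\<Sum>a1\<in>pencil a0 v. line_count a0 a1)
       = CARD('a) * card (far_gens a0 v) + CARD('a)^2 * card (near_gens a0 v)"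
proof -
  have "(\<Sum>a1\<in>pencil a0 v. line_count a0 a1) = (\<Sum>a1\<in>pencil a0 v. card {u\<in>arc_gens. u \<in> line_of a0 a1})"
    unfolding line_count_def by (simp add: Int_def)
  also have "\<dots> = CARD('a) * card (far_gens a0 v) + CARD('a)^2 * card (near_gens a0 v)"
  proof (rule sum_card_weighted)
    fix u assume "u \<in> arc_gens"
    then show "card {a1\<in>pencil a0 v. u \<in> line_of a0 a1}
      = (if u \<in> far_gens a0 v then CARD('a) else 0) + (if u \<in> near_gens a0 v then CARD('a)^2 else 0)"
      by (rule card_pencil_lines_through[OF arc_gens_coeff0_nonzero[OF v] d0])
  qed (auto simp: far_gens_def near_gens_def)
  finally show ?thesis .
qed

subsection \<open>Neighbour classes\<close>

definition class_count :: "'a v3 \<Rightarrow> nat" where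
  "class_count x = card {u\<in>arc_gens. in_span (coeff0 u) x}"

definition class_size :: nat where "class_size = nunits * (m+1) * (2*m+1)"

lemma card_far_gens_containing:
  assumes v0: "coeff0 v \<noteq> 0" and u: "u \<in> arc_gens"
  shows "card {a0\<in>{a0. a0 \<noteq> 0 \<and> dot a0 (coeff0 v) = 0}. u \<in> far_gens a0 v}
    = (if in_span (coeff0 u) (coeff0 v) then 0 else 2*m+1)"
proof -
  have "{a0\<in>{a0. a0 \<noteq> 0 \<and> dot a0 (coeff0 v) = 0}. u \<in> far_gens a0 v}
      = (if in_span (coeff0 u) (coeff0 v) then {} else {a0. a0 \<noteq> 0 \<and> dot a0 (coeff0 v) = 0 \<and> dot a0 (coeff0 u) = 0})"
    using u by (auto simp: far_gens_def)
  then show ?thesis using card_nonzero_orthogonal_pair[OF v0, of "coeff0 u"] card_field_minus_1 by simp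
qed

text \<open>A near generator \<open>u\<close> with \<open>u\<^sub>0 = c v\<^sub>0\<close> is counted for those \<open>a\<^sub>0\<close> that also vanish on
  \<open>u\<^sub>1 - \<sigma>(c) v\<^sub>1\<close>; this vector lies in \<open>\<bbbF>v\<^sub>0\<close> exactly when \<open>u\<close> generates the same point as \<open>v\<close>.\<close>
lemma card_near_gens_containing:
  assumes v: "v \<in> arc_gens" and u: "u \<in> arc_gens" and c: "coeff0 u = smul c (coeff0 v)"
  shows "card {a0\<in>{a0. a0 \<noteq> 0 \<and> dot a0 (coeff0 v) = 0}. u \<in> near_gens a0 v}
    = (if u \<in> gens (range (vscale \<sigma> v)) then (2*m+1)*(2*m+3) else 2*m+1)"
proof -
  have v0: "coeff0 v \<noteq> 0" using v arc_gens_coeff0_nonzero by blast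
  have c_unique: "c' = c" if "coeff0 u = smul c' (coeff0 v)" for c'
    using that c v0 smul_right_cancel by metis
  have "c \<noteq> 0" using c arc_gens_coeff0_nonzero[OF u] by auto
  define z where "z = coeff1 u - smul (\<sigma> c) (coeff1 v)"
  have "{a0\<in>{a0. a0 \<noteq> 0 \<and> dot a0 (coeff0 v) = 0}. u \<in> near_gens a0 v}
      = {a0. a0 \<noteq> 0 \<and> dot a0 (coeff0 v) = 0 \<and> dot a0 z = 0}"
    using u c c_unique unfolding near_gens_def z_def by (auto simp: dot_diff_right dot_smul_right)
  moreover have "u \<in> gens (range (vscale \<sigma> v)) \<longleftrightarrow> in_span z (coeff0 v)"
    unfolding gens_range_vscale_coeffs[OF v0] z_def using c c_unique \<open>c \<noteq> 0\<close> by blast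
  ultimately show ?thesis
    using card_nonzero_orthogonal_pair[OF v0, of z] card_field_minus_1 card_field_sq_minus_1 by simp
qed

lemma sum_card_far_gens:
  assumes v: "v \<in> arc_gens"
  shows "(\<Sum>a0\<in>{a0. a0 \<noteq> 0 \<and> dot a0 (coeff0 v) = 0}. card (far_gens a0 v)) + (2*m+1) * class_count (coeff0 v)
    = (2*m+1) * card arc_gens"
proof -
  let ?W = "{a0. a0 \<noteq> 0 \<and> dot a0 (coeff0 v) = 0}"
  let ?F = "{u\<in>arc_gens. \<not> in_span (coeff0 u) (coeff0 v)}"
  have "far_gens a0 v = {u\<in>arc_gens. u \<in> far_gens a0 v}" for a0 by (auto simp: far_gens_def)
  then have "(\<Sum>a0\<in>?W. card (far_gens a0 v)) = (\<Sum>a0\<in>?W. card {u\<in>arc_gens. u \<in> far_gens a0 v})"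
    by simp
  also have "\<dots> = (2*m+1) * card ?F"
  proof (rule sum_card_indicator)
    fix u assume "u \<in> arc_gens"
    then show "card {a0\<in>?W. u \<in> far_gens a0 v} = (if u \<in> ?F then 2*m+1 else 0)"
      using card_far_gens_containing[OF arc_gens_coeff0_nonzero[OF v]] by simp
  qed simp_all
  finally have far: "(\<Sum>a0\<in>?W. card (far_gens a0 v)) = (2*m+1) * card ?F" .
  have "class_count (coeff0 v) + card ?F = card arc_gens"
    unfolding class_count_def by (rule card_filter_add_card_filter_not) simp
  then have "(2*m+1) * card arc_gens = (2*m+1) * (card ?F + class_count (coeff0 v))"
    by (simp only: add.commute)
  then show ?thesis unfolding far by (simp only: distrib_left)
qed

lemma sum_card_near_gens:
  assumes v: "v \<in> arc_gens"
  shows "(\<Sum>a0\<in>{a0. a0 \<noteq> 0 \<and> dot a0 (coeff0 v) = 0}. card (near_gens a0 v))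
    = (2*m+1) * class_count (coeff0 v) + (2*m+2)*(2*m+1) * nunits"
proof -
  let ?W = "{a0. a0 \<noteq> 0 \<and> dot a0 (coeff0 v) = 0}"
  let ?P = "{u\<in>arc_gens. in_span (coeff0 u) (coeff0 v)}"
  let ?E = "gens (range (vscale \<sigma> v))"
  have v0: "coeff0 v \<noteq> 0" using v arc_gens_coeff0_nonzero by blast
  have EP: "?E \<subseteq> ?P"
    using gens_subset_arc_gens[OF v] gens_range_vscale_coeffs[OF v0] unfolding in_span_def by blast
  have "near_gens a0 v = {u\<in>arc_gens. u \<in> near_gens a0 v}" for a0 by (auto simp: near_gens_def)
  then have "(\<Sum>a0\<in>?W. card (near_gens a0 v)) = (\<Sum>a0\<in>?W. card {u\<in>arc_gens. u \<in> near_gens a0 v})"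
    by simp
  also have "\<dots> = (2*m+1) * card (?P - ?E) + (2*m+1)*(2*m+3) * card ?E"
  proof (rule sum_card_weighted)
    fix u assume u: "u \<in> arc_gens"
    show "card {a0\<in>?W. u \<in> near_gens a0 v}
        = (if u \<in> ?P - ?E then 2*m+1 else 0) + (if u \<in> ?E then (2*m+1)*(2*m+3) else 0)"
    proof (cases "in_span (coeff0 u) (coeff0 v)")
      case True
      then obtain c where "coeff0 u = smul c (coeff0 v)" unfolding in_span_def by blast
      then show ?thesis using card_near_gens_containing[OF v u] u True by auto
    next
      case False
      then have "{a0\<in>?W. u \<in> near_gens a0 v} = {}" unfolding near_gens_def in_span_def by blast
      then show ?thesis using EP False by auto
    qed
  qed (use EP in auto)
  finally have near: "(\<Sum>a0\<in>?W. card (near_gens a0 v)) = (2*m+1) * card (?P - ?E) + (2*m+1)*(2*m+3) * card ?E" .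
  have "phg_point \<sigma> (range (vscale \<sigma> v))" unfolding phg_point_def using inj_vscale[OF v0] by blast
  then have cE: "card ?E = nunits" by (rule card_gens_eq_nunits)
  have "class_count (coeff0 v) = card (?P - ?E) + card ?E"
    unfolding class_count_def using card_Diff_subset[OF _ EP] card_mono[OF _ EP] by simp
  then show ?thesis unfolding near cE by (simp add: algebra_simps)
qed

lemma pencil_sum_le:
  assumes v: "v \<in> arc_gens" and a0: "a0 \<noteq> 0" "dot a0 (coeff0 v) = 0"
  shows "CARD('a) * card (far_gens a0 v) + CARD('a)^2 * card (near_gens a0 v) \<le> CARD('a)^2 * line_max"
proof -
  have "(\<Sum>a1\<in>pencil a0 v. line_count a0 a1) \<le> of_nat (card (pencil a0 v)) * line_max"
    by (rule sum_bounded_above) (rule line_count_le[OF a0(1)])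
  then show ?thesis
    unfolding sum_line_count_pencil[OF v a0(2)] card_pencil[OF arc_gens_coeff0_nonzero[OF v]] by simp
qed

lemma sum_pencil_sums:
  assumes v: "v \<in> arc_gens"
  shows "(\<Sum>a0\<in>{a0. a0 \<noteq> 0 \<and> dot a0 (coeff0 v) = 0}. CARD('a) * card (far_gens a0 v) + CARD('a)^2 * card (near_gens a0 v))
        + (2*m+2)*(2*m+1)*(2*m+1) * class_size
      = (\<Sum>a0\<in>{a0. a0 \<noteq> 0 \<and> dot a0 (coeff0 v) = 0}. CARD('a)^2 * line_max)
        + (2*m+2)*(2*m+1)*(2*m+1) * class_count (coeff0 v)"
proof -
  let ?W = "{a0. a0 \<noteq> 0 \<and> dot a0 (coeff0 v) = 0}"
  have "card ?W = (2*m+1)*(2*m+3)"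
    using card_nonzero_orthogonal[OF arc_gens_coeff0_nonzero[OF v]] card_field_sq_minus_1 by simp
  then have "(\<Sum>a0\<in>?W. CARD('a)^2 * line_max) = (2*m+1)*(2*m+3) * ((2*m+2)*(2*m+2) * line_max)"
    unfolding card_field_sq by simp
  moreover have "(\<Sum>a0\<in>?W. CARD('a) * card (far_gens a0 v) + CARD('a)^2 * card (near_gens a0 v))
      = (2*m+2) * (\<Sum>a0\<in>?W. card (far_gens a0 v)) + (2*m+2)*(2*m+2) * (\<Sum>a0\<in>?W. card (near_gens a0 v))"
  proof -
    have "(\<Sum>a0\<in>?W. CARD('a) * card (far_gens a0 v) + CARD('a)^2 * card (near_gens a0 v))
        = CARD('a) * (\<Sum>a0\<in>?W. card (far_gens a0 v)) + CARD('a)^2 * (\<Sum>a0\<in>?W. card (near_gens a0 v))"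
      by (simp add: sum.distrib sum_distrib_left)
    then show ?thesis by (simp only: card_field power2_eq_square)
  qed
  ultimately show ?thesis
    using pencil_sums_identity[OF sum_card_far_gens[OF v] sum_card_near_gens[OF v] card_arc_gens line_max_def]
    unfolding class_size_def by simp
qed

lemma class_count_coeff0_le: assumes v: "v \<in> arc_gens" shows "class_count (coeff0 v) \<le> class_size"
proof -
  have "(\<Sum>a0\<in>{a0. a0 \<noteq> 0 \<and> dot a0 (coeff0 v) = 0}. CARD('a) * card (far_gens a0 v) + CARD('a)^2 * card (near_gens a0 v))
      \<le> (\<Sum>a0\<in>{a0. a0 \<noteq> 0 \<and> dot a0 (coeff0 v) = 0}. CARD('a)^2 * line_max)"
    by (rule sum_mono) (use pencil_sum_le[OF v] in simp)
  then have "(2*m+2)*(2*m+1)*(2*m+1) * class_count (coeff0 v) \<le> (2*m+2)*(2*m+1)*(2*m+1) * class_size"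
    using sum_pencil_sums[OF v] by linarith
  then show ?thesis by (rule mult_left_le_imp_le) simp
qed

lemma class_count_le: "class_count x \<le> class_size"
proof (cases "\<exists>v\<in>arc_gens. in_span (coeff0 v) x")
  case True
  then obtain v where v: "v \<in> arc_gens" "in_span (coeff0 v) x" by blast
  have "in_span x (coeff0 v)" using in_span_sym[OF arc_gens_coeff0_nonzero[OF v(1)] v(2)] .
  then have "{u\<in>arc_gens. in_span (coeff0 u) x} = {u\<in>arc_gens. in_span (coeff0 u) (coeff0 v)}"
    using in_span_trans v(2) by blast
  then show ?thesis using class_count_coeff0_le[OF v(1)] unfolding class_count_def by simp
next
  case False
  then have "{u\<in>arc_gens. in_span (coeff0 u) x} = {}" by blast
  then have "class_count x = 0" unfolding class_count_def by (simp only: card.empty)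
  then show ?thesis by simp
qed

text \<open>Each arc generator lies in the classes of the \<open>q - 1\<close> nonzero multiples of its
  reduction, and there are \<open>q\<^sup>3 - 1\<close> nonzero vectors; so the upper bound for the class
  counts is attained on average, hence everywhere.\<close>
lemma class_count_eq: assumes x: "x \<noteq> 0" shows "class_count x = class_size"
proof -
  let ?NZ = "{x::'a v3. x \<noteq> 0}"
  have "(\<Sum>x\<in>?NZ. class_count x) = (\<Sum>x\<in>?NZ. card {u\<in>arc_gens. in_span (coeff0 u) x})"
    unfolding class_count_def ..
  also have "\<dots> = (2*m+1) * card arc_gens"
  proof (rule sum_card_indicator)
    fix u assume "u \<in> arc_gens"
    then show "card {x\<in>?NZ. in_span (coeff0 u) x} = (if u \<in> arc_gens then 2*m+1 else 0)"
      using card_in_span_of[OF arc_gens_coeff0_nonzero] card_field_minus_1 by simp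
  qed simp_all
  also have "\<dots> = (\<Sum>x\<in>?NZ. class_size)"
    using card_nonzero_v3[where 'a='a] card_field_cube_minus_1
    by (simp add: card_arc_gens class_size_def algebra_simps)
  finally show ?thesis by (rule sum_mono_inv) (use class_count_le x in auto)
qed

lemma pencil_sum_eq:
  assumes v: "v \<in> arc_gens" and a0: "a0 \<noteq> 0" "dot a0 (coeff0 v) = 0"
  shows "CARD('a) * card (far_gens a0 v) + CARD('a)^2 * card (near_gens a0 v) = CARD('a)^2 * line_max"
proof -
  have "(\<Sum>a0\<in>{a0. a0 \<noteq> 0 \<and> dot a0 (coeff0 v) = 0}. CARD('a) * card (far_gens a0 v) + CARD('a)^2 * card (near_gens a0 v))
      = (\<Sum>a0\<in>{a0. a0 \<noteq> 0 \<and> dot a0 (coeff0 v) = 0}. CARD('a)^2 * line_max)"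
    using sum_pencil_sums[OF v] class_count_eq[OF arc_gens_coeff0_nonzero[OF v]] by simp
  then show ?thesis by (rule sum_mono_inv) (use pencil_sum_le[OF v] a0 in auto)
qed

lemma line_count_full:
  assumes v: "v \<in> arc_gens" and a0: "a0 \<noteq> 0" and on_line: "v \<in> line_of a0 a1"
  shows "line_count a0 a1 = line_max"
proof -
  have d0: "dot a0 (coeff0 v) = 0" and a1: "a1 \<in> pencil a0 v"
    using on_line by (simp_all add: line_of_iff_pencil)
  have "(\<Sum>a1\<in>pencil a0 v. line_count a0 a1) = (\<Sum>a1\<in>pencil a0 v. line_max)"
    using sum_line_count_pencil[OF v d0] pencil_sum_eq[OF v a0 d0] card_pencil[OF arc_gens_coeff0_nonzero[OF v]]
    by simp
  then show ?thesis by (rule sum_mono_inv) (use line_count_le[OF a0] a1 in auto)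
qed

lemma card_far_gens:
  assumes v: "v \<in> arc_gens" and a0: "a0 \<noteq> 0" "dot a0 (coeff0 v) = 0"
  shows "card (far_gens a0 v) = (2*m+2) * class_size"
proof -
  let ?X = "{x. x \<noteq> 0 \<and> dot a0 x = 0 \<and> \<not> in_span x (coeff0 v)}"
  have v0: "coeff0 v \<noteq> 0" using v arc_gens_coeff0_nonzero by blast
  have "(\<Sum>x\<in>?X. class_count x) = (\<Sum>x\<in>?X. card {u\<in>arc_gens. in_span (coeff0 u) x})"
    unfolding class_count_def ..
  also have "\<dots> = (2*m+1) * card (far_gens a0 v)"
  proof (rule sum_card_indicator)
    fix u assume u: "u \<in> arc_gens"
    have u0: "coeff0 u \<noteq> 0" using u arc_gens_coeff0_nonzero by blast
    have "x \<in> ?X \<longleftrightarrow> u \<in> far_gens a0 v" if x0: "x \<noteq> 0" and ux: "in_span (coeff0 u) x" for x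
    proof -
      obtain c where c: "coeff0 u = smul c x" using ux unfolding in_span_def by blast
      have "c \<noteq> 0" using c u0 by auto
      then have "dot a0 (coeff0 u) = 0 \<longleftrightarrow> dot a0 x = 0" using c by (simp add: dot_smul_right)
      moreover have "in_span x (coeff0 v) \<longleftrightarrow> in_span (coeff0 u) (coeff0 v)"
        using in_span_trans ux in_span_sym[OF u0 ux] by blast
      ultimately show ?thesis using x0 u unfolding far_gens_def by blast
    qed
    then have "{x\<in>?X. in_span (coeff0 u) x} = (if u \<in> far_gens a0 v then {y. y \<noteq> 0 \<and> in_span (coeff0 u) y} else {})"
      by auto
    then show "card {x\<in>?X. in_span (coeff0 u) x} = (if u \<in> far_gens a0 v then 2*m+1 else 0)"
      using card_in_span_of[OF u0] card_field_minus_1 by simp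
  qed (auto simp: far_gens_def)
  finally have sum_X: "(\<Sum>x\<in>?X. class_count x) = (2*m+1) * card (far_gens a0 v)" .
  have "card ?X = (2*m+1)*(2*m+2)"
    using card_orthogonal_off_span[OF a0(1) v0 a0(2)] card_field card_field_minus_1 by simp
  then have "(\<Sum>x\<in>?X. class_count x) = (2*m+1) * ((2*m+2) * class_size)"
    by (simp add: class_count_eq algebra_simps)
  then have "(2*m+1) * card (far_gens a0 v) = (2*m+1) * ((2*m+2) * class_size)"
    unfolding sum_X .
  moreover have nz: "2*m+1 \<noteq> (0::nat)" by simp
  ultimately show ?thesis using mult_left_cancel[OF nz] by blast
qed

lemma card_near_gens:
  assumes v: "v \<in> arc_gens" and a0: "a0 \<noteq> 0" "dot a0 (coeff0 v) = 0"
  shows "card (near_gens a0 v) = nunits * (m+1)"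
proof -
  have "(2*m+2)*(2*m+2) * (class_size + card (near_gens a0 v))
      = (2*m+2) * ((2*m+2) * class_size) + (2*m+2)*(2*m+2) * card (near_gens a0 v)"
    by (simp add: algebra_simps)
  also have "\<dots> = (2*m+2)*(2*m+2) * line_max"
    using pencil_sum_eq[OF assms] card_far_gens[OF assms] by (simp only: card_field power2_eq_square)
  finally have "(2*m+2)*(2*m+2) * (class_size + card (near_gens a0 v)) = (2*m+2)*(2*m+2) * line_max" .
  then have "class_size + card (near_gens a0 v) = line_max"
    using mult_left_cancel[of "(2*m+2)*(2*m+2)"] by simp
  moreover have "line_max = class_size + nunits * (m+1)"
    unfolding class_size_def line_max_def by (simp add: algebra_simps)
  ultimately show ?thesis by simp
qed

subsection \<open>A parity contradiction\<close>

definition class_slice :: "'a v3 \<Rightarrow> 'a v3 \<Rightarrow> 'a vec3 set" where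
  "class_slice x a0 = {u\<in>arc_gens. in_span (coeff0 u) x \<and> dot a0 (coeff1 u) = 0}"

lemma card_class_slice:
  assumes x: "x \<noteq> 0" and a0: "a0 \<noteq> 0" "dot a0 x = 0"
  shows "card (class_slice x a0) = (if class_slice x a0 = {} then 0 else nunits * (m+1))"
proof (cases "class_slice x a0 = {}")
  case False
  then obtain v where v: "v \<in> arc_gens" "in_span (coeff0 v) x" "dot a0 (coeff1 v) = 0"
    unfolding class_slice_def by blast
  have v0: "coeff0 v \<noteq> 0" using v arc_gens_coeff0_nonzero by blast
  have d0: "dot a0 (coeff0 v) = 0" using v(2) a0(2) unfolding in_span_def by (auto simp: dot_smul_right)
  have "in_span x (coeff0 v)" using in_span_sym[OF v0 v(2)] .
  then have "in_span (coeff0 u) (coeff0 v) \<longleftrightarrow> in_span (coeff0 u) x" for u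
    using in_span_trans v(2) by blast
  then have "near_gens a0 v = class_slice x a0"
    unfolding near_gens_def class_slice_def v(3) in_span_def by auto
  then show ?thesis using card_near_gens[OF v(1) a0(1) d0] False by simp
qed simp

lemma gens_const_point:
  assumes x: "x \<noteq> 0"
  shows "gens (range (vscale \<sigma> (of_coeffs x 0))) = {u. coeff0 u \<noteq> 0 \<and> in_span (coeff0 u) x \<and> in_span (coeff1 u) x}"
  using gens_range_vscale_coeffs[of "of_coeffs x 0"] x
  unfolding in_span_def by (auto simp: smul_eq_0_iff)

text \<open>The generators \<open>u\<close> with both \<open>u\<^sub>0\<close> and \<open>u\<^sub>1\<close> in \<open>\<bbbF>x\<close> are exactly those of the point
  spanned by \<open>x\<close> itself, which either lies in \<open>K\<close> or not.\<close>
lemma card_const_point_gens: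
  assumes x: "x \<noteq> 0"
  shows "card {u\<in>arc_gens. in_span (coeff0 u) x \<and> in_span (coeff1 u) x} \<in> {0, nunits}"
proof -
  let ?P = "range (vscale \<sigma> (of_coeffs x 0))"
  have "u \<in> gens ?P \<longleftrightarrow> coeff0 u \<noteq> 0 \<and> in_span (coeff0 u) x \<and> in_span (coeff1 u) x" for u
    using gens_const_point[OF x] by blast
  moreover have "u \<in> gens ?P \<Longrightarrow> range (vscale \<sigma> u) = ?P" for u
    unfolding gens_def by blast
  ultimately have eq: "{u\<in>arc_gens. in_span (coeff0 u) x \<and> in_span (coeff1 u) x} = (if ?P \<in> K then gens ?P else {})"
    unfolding arc_gens_def by auto
  have "inj (vscale \<sigma> (of_coeffs x 0))" using x by (simp add: inj_vscale)
  then have "phg_point \<sigma> ?P" unfolding phg_point_def by blast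
  then show ?thesis unfolding eq using card_gens_eq_nunits by simp
qed

text \<open>Counting pairs \<open>(a\<^sub>0, u)\<close> with \<open>u\<close> in the class of \<open>x\<close> and \<open>a\<^sub>0\<cdot>u\<^sub>1 = 0\<close>: nonempty
  slices have \<open>|R\<^sup>\<times>|(m + 1)\<close> elements, and a generator \<open>u\<close> is counted \<open>q - 1\<close> or \<open>q\<^sup>2 - 1\<close>
  times according as \<open>u\<^sub>1 \<notin> \<bbbF>x\<close> or \<open>u\<^sub>1 \<in> \<bbbF>x\<close>.\<close>
lemma even_empty_slices_at_vector:
  assumes x: "x \<noteq> 0"
  shows "even (card {a0. a0 \<noteq> 0 \<and> dot a0 x = 0 \<and> class_slice x a0 = {}})"
proof -
  let ?W = "{a0. a0 \<noteq> 0 \<and> dot a0 x = 0}"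
  let ?Ne = "{a0\<in>?W. class_slice x a0 \<noteq> {}}"
  let ?F = "{u\<in>arc_gens. in_span (coeff0 u) x \<and> in_span (coeff1 u) x}"
  let ?G = "{u\<in>arc_gens. in_span (coeff0 u) x \<and> \<not> in_span (coeff1 u) x}"
  have cW: "card ?W = (2*m+1)*(2*m+3)" using card_nonzero_orthogonal[OF x] card_field_sq_minus_1 by simp
  have "(\<Sum>a0\<in>?W. card (class_slice x a0)) = (\<Sum>a0\<in>?W. card {u\<in>arc_gens. in_span (coeff0 u) x \<and> dot a0 (coeff1 u) = 0})"
    unfolding class_slice_def ..
  also have "\<dots> = (2*m+1) * card ?G + (2*m+1)*(2*m+3) * card ?F"
  proof (rule sum_card_weighted)
    fix u assume u: "u \<in> arc_gens"
    show "card {a0\<in>?W. in_span (coeff0 u) x \<and> dot a0 (coeff1 u) = 0}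
        = (if u \<in> ?G then 2*m+1 else 0) + (if u \<in> ?F then (2*m+1)*(2*m+3) else 0)"
    proof (cases "in_span (coeff0 u) x")
      case True
      then have "{a0\<in>?W. in_span (coeff0 u) x \<and> dot a0 (coeff1 u) = 0}
          = {a0. a0 \<noteq> 0 \<and> dot a0 x = 0 \<and> dot a0 (coeff1 u) = 0}" by blast
      then show ?thesis
        using card_nonzero_orthogonal_pair[OF x, of "coeff1 u"] card_field_minus_1 card_field_sq_minus_1 u True
        by simp
    qed simp
  qed simp_all
  finally have by_gens: "(\<Sum>a0\<in>?W. card (class_slice x a0)) = (2*m+1) * card ?G + (2*m+1)*(2*m+3) * card ?F" .
  have "(\<Sum>a0\<in>?W. card (class_slice x a0)) = (\<Sum>a0\<in>?W. if a0 \<in> ?Ne then nunits*(m+1) else 0)"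
    by (rule sum.cong[OF refl]) (use card_class_slice x in auto)
  also have "\<dots> = nunits*(m+1) * card ?Ne"
    by (rule sum_indicator_const) auto
  finally have by_slices: "(\<Sum>a0\<in>?W. card (class_slice x a0)) = nunits*(m+1) * card ?Ne" .
  have "?F = {u\<in>{u\<in>arc_gens. in_span (coeff0 u) x}. in_span (coeff1 u) x}"
    and "?G = {u\<in>{u\<in>arc_gens. in_span (coeff0 u) x}. \<not> in_span (coeff1 u) x}" by auto
  then have "card ?F + card ?G = card {u\<in>arc_gens. in_span (coeff0 u) x}"
    by (simp only:) (rule card_filter_add_card_filter_not, simp)
  then have "card ?G + card ?F = card {u\<in>arc_gens. in_span (coeff0 u) x}"
    by (simp only: add.commute)
  also have "\<dots> = nunits*(m+1)*(2*m+1)"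
    using class_count_eq[OF x] unfolding class_count_def class_size_def .
  finally have GF: "card ?G + card ?F = nunits*(m+1)*(2*m+1)" .
  have "even ((2*m+1)*(2*m+3) - card ?Ne)"
    by (rule even_count_arith[OF nunits_pos GF])
      (use by_gens by_slices card_const_point_gens[OF x] in auto)
  moreover have "{a0. a0 \<noteq> 0 \<and> dot a0 x = 0 \<and> class_slice x a0 = {}} = ?W - ?Ne" by blast
  moreover have "card (?W - ?Ne) = card ?W - card ?Ne" by (rule card_Diff_subset) auto
  ultimately show ?thesis using cW by simp
qed

text \<open>Counting pairs \<open>(x, u)\<close> with \<open>u\<close> in the class of \<open>x\<close> and \<open>a\<^sub>0\<cdot>u\<^sub>1 = 0\<close> for fixed
  \<open>a\<^sub>0\<close>: only generators on the line \<open>line_of a0 0\<close> occur, each \<open>q - 1\<close> times, and that line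
  carries either no arc point or the maximal number.\<close>
lemma odd_empty_slices_on_line:
  assumes a0: "a0 \<noteq> 0"
  shows "odd (card {x. x \<noteq> 0 \<and> dot a0 x = 0 \<and> class_slice x a0 = {}})"
proof -
  let ?X = "{x. x \<noteq> 0 \<and> dot a0 x = 0}"
  let ?Ne = "{x\<in>?X. class_slice x a0 \<noteq> {}}"
  let ?L = "{u\<in>arc_gens. u \<in> line_of a0 0}"
  have cX: "card ?X = (2*m+1)*(2*m+3)"
    using card_nonzero_orthogonal[OF a0] card_field_sq_minus_1 by (simp add: dot_commute)
  have "(\<Sum>x\<in>?X. card (class_slice x a0)) = (\<Sum>x\<in>?X. card {u\<in>arc_gens. in_span (coeff0 u) x \<and> dot a0 (coeff1 u) = 0})"
    unfolding class_slice_def ..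
  also have "\<dots> = (2*m+1) * card ?L"
  proof (rule sum_card_indicator)
    fix u assume u: "u \<in> arc_gens"
    have u0: "coeff0 u \<noteq> 0" using u arc_gens_coeff0_nonzero by blast
    have "dot a0 x = 0 \<longleftrightarrow> dot a0 (coeff0 u) = 0" if ux: "in_span (coeff0 u) x" for x
    proof -
      obtain c where c: "coeff0 u = smul c x" using ux unfolding in_span_def by blast
      have "c \<noteq> 0" using c u0 by auto
      then show ?thesis using c by (simp add: dot_smul_right)
    qed
    then have "{x\<in>?X. in_span (coeff0 u) x \<and> dot a0 (coeff1 u) = 0}
        = (if u \<in> ?L then {y. y \<noteq> 0 \<and> in_span (coeff0 u) y} else {})"
      using u by (auto simp: line_of_def)
    then show "card {x\<in>?X. in_span (coeff0 u) x \<and> dot a0 (coeff1 u) = 0} = (if u \<in> ?L then 2*m+1 else 0)"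
      using card_in_span_of[OF u0] card_field_minus_1 by simp
  qed simp_all
  finally have by_gens: "(\<Sum>x\<in>?X. card (class_slice x a0)) = (2*m+1) * line_count a0 0"
    unfolding line_count_def by (simp add: Int_def)
  have "(\<Sum>x\<in>?X. card (class_slice x a0)) = (\<Sum>x\<in>?X. if x \<in> ?Ne then nunits*(m+1) else 0)"
    by (rule sum.cong[OF refl]) (use card_class_slice a0 in auto)
  also have "\<dots> = nunits*(m+1) * card ?Ne"
    by (rule sum_indicator_const) auto
  finally have by_slices: "(\<Sum>x\<in>?X. card (class_slice x a0)) = nunits*(m+1) * card ?Ne" .
  have "line_count a0 0 = 0 \<or> line_count a0 0 = line_max"
  proof (cases "arc_gens \<inter> line_of a0 0 = {}")
    case False
    then show ?thesis using line_count_full[OF _ a0] by blast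
  qed (simp add: line_count_def)
  then have "odd ((2*m+1)*(2*m+3) - card ?Ne)"
    using odd_count_arith[OF nunits_pos, of m "card ?Ne" "line_count a0 0"] by_gens by_slices
    unfolding line_max_def by simp
  moreover have "{x. x \<noteq> 0 \<and> dot a0 x = 0 \<and> class_slice x a0 = {}} = ?X - ?Ne" by blast
  moreover have "card (?X - ?Ne) = card ?X - card ?Ne" by (rule card_Diff_subset) auto
  ultimately show ?thesis using cX by simp
qed

text \<open>Counting the empty pairs \<open>(x, a\<^sub>0)\<close> by \<open>x\<close> gives an even number, by \<open>a\<^sub>0\<close> a sum of
  \<open>q\<^sup>3 - 1\<close> odd numbers.\<close>
theorem arc_impossible: False
proof -
  let ?NZ = "{x::'a v3. x \<noteq> 0}"
  let ?E = "\<lambda>x a0. dot a0 x = 0 \<and> class_slice x a0 = {}"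
  have "(\<Sum>x\<in>?NZ. card {a0\<in>?NZ. ?E x a0}) = (\<Sum>a0\<in>?NZ. card {x\<in>?NZ. ?E x a0})"
    by (rule sum_card_swap) simp_all
  moreover have "even (\<Sum>x\<in>?NZ. card {a0\<in>?NZ. ?E x a0})"
  proof (rule dvd_sum)
    fix x assume "x \<in> ?NZ"
    then show "even (card {a0\<in>?NZ. ?E x a0})"
      using even_empty_slices_at_vector by (simp add: conj_assoc)
  qed
  moreover have "odd (\<Sum>a0\<in>?NZ. card {x\<in>?NZ. ?E x a0})"
  proof -
    have "{a0\<in>?NZ. odd (card {x\<in>?NZ. ?E x a0})} = ?NZ"
      using odd_empty_slices_on_line by (auto simp: conj_assoc)
    moreover have "odd (card ?NZ)" using card_nonzero_v3[where 'a='a] card_field_cube_minus_1 by simp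
    ultimately show ?thesis by (simp add: even_sum_iff)
  qed
  ultimately show False by simp
qed

end

corollary no_critical_arc_even_order:
  fixes \<sigma> :: "'a::{field,finite} \<Rightarrow> 'a"
  assumes "field_aut \<sigma>" and "even CARD('a)"
  shows "\<not> proj_arc \<sigma> K ((CARD('a)^4 - CARD('a)) div 2) (CARD('a)^2 div 2)"
proof
  assume arc: "proj_arc \<sigma> K ((CARD('a)^4 - CARD('a)) div 2) (CARD('a)^2 div 2)"
  have "card {0::'a, 1} \<le> CARD('a)" by (rule card_mono) simp_all
  then have "CARD('a) = 2 * (CARD('a) div 2 - 1) + 2" using assms(2) by auto
  then interpret even_order_arc \<sigma> K "CARD('a) div 2 - 1"
    using assms(1) arc by unfold_locales
  show False by (rule arc_impossible)
qed

theorem theorem3p12: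
  fixes \<sigma> :: "'a::{field,finite} \<Rightarrow> 'a" and r :: nat
  assumes "r \<ge> 1" and "card (UNIV :: 'a set) = 2 ^ r" and "field_aut \<sigma>"
  shows "\<not> (\<exists>K. proj_arc \<sigma> K ((card (UNIV :: 'a set) ^ 4 - card (UNIV :: 'a set)) div 2) (card (UNIV :: 'a set) ^ 2 div 2))"
  using no_critical_arc_even_order[OF assms(3)] assms(1,2) by simp

end
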